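(* Let $\langle X,\tau\rangle$ be a Hausdorff space. Suppose there are a dense subset $Q\subseteq X$ and an asymmetric binary relation $R$ on $X$ such that $\langle X,\tau\rangle$ is $R$-bidirected along $Q$. Then $\langle X,\tau\rangle$ is not a continuous open image of the Sorgenfrey line.
   Context: The Sorgenfrey line is $\mathbb R$ with topology generated by $\{[a,b)\}$; "continuous open image" means image under a continuous open surjection. $R$ is asymmetric if $xRy$ implies $\neg yRx$. For $y\in X$: $y{\downarrow}_R=\{z:zRy\}$, $y{\uparrow}_R=\{z:yRz\}$. For $Q$ dense and $x\in X$: an open neighborhood $U$ of $x$ is $R$-right along $Q$ if $xRy$ for all $y\in(U\setminus\{x\})\cap Q$; $x$ looks to the $R$-right along $Q$ if some open neighborhood of $x$ is $R$-right along $Q$ and for every open neighborhood $U$ of $x$ there is $y\in(U\setminus\{x\})\cap Q$ such that $y{\downarrow}_R$ is a neighborhood of $x$. Symmetrically, $U$ is $R$-left along $Q$ if $yRx$ for all $y\in(U\setminus\{x\})\cap Q$; $x$ looks to the $R$-left along $Q$ if some open neighborhood of $x$ is $R$-left along $Q$ and for every open neighborhood $U$ of $x$ there is $y\in(U\setminus\{x\})\cap Q$ with $y{\uparrow}_R$ a neighborhood of $x$. $\langle X,\tau\rangle$ is $R$-bidirected along $Q$ if there are dense sets $A_l,A_r$ with $X=A_l\cup A_r$, $A_l\cap A_r=\emptyset$, every $x\in A_r$ looks to the $R$-right along $Q$ and every $x\in A_l$ looks to the $R$-left along $Q$. *)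

theory Defs
  imports "HOL-Analysis.Analysis"
begin

definition sorgenfrey_line :: "real topology" where
  "sorgenfrey_line = topology_generated_by {{a..<b} | a b. a < b}"

definition continuous_open_image_of :: "'a topology \<Rightarrow> 'b topology \<Rightarrow> bool" where
  "continuous_open_image_of Y S \<longleftrightarrow>
     (\<exists>f. continuous_map S Y f \<and> open_map S Y f \<and> f ` topspace S = topspace Y)"

definition dense_in :: "'a topology \<Rightarrow> 'a set \<Rightarrow> bool" where
  "dense_in X Q \<longleftrightarrow> Q \<subseteq> topspace X \<and> X closure_of Q = topspace X"

definition asymmetric_on :: "'a set \<Rightarrow> ('a \<Rightarrow> 'a \<Rightarrow> bool) \<Rightarrow> bool" where
  "asymmetric_on A R \<longleftrightarrow> (\<forall>x\<in>A. \<forall>y\<in>A. R x y \<longrightarrow> \<not> R y x)"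

definition is_nbhd :: "'a topology \<Rightarrow> 'a set \<Rightarrow> 'a \<Rightarrow> bool" where
  "is_nbhd X N x \<longleftrightarrow> (\<exists>V. openin X V \<and> x \<in> V \<and> V \<subseteq> N)"

definition looks_right :: "'a topology \<Rightarrow> ('a \<Rightarrow> 'a \<Rightarrow> bool) \<Rightarrow> 'a set \<Rightarrow> 'a \<Rightarrow> bool" where
  "looks_right X R Q x \<longleftrightarrow>
     (\<exists>U. openin X U \<and> x \<in> U \<and> (\<forall>y \<in> (U - {x}) \<inter> Q. R x y)) \<and>
     (\<forall>U. openin X U \<and> x \<in> U \<longrightarrow>
        (\<exists>y \<in> (U - {x}) \<inter> Q. is_nbhd X {z \<in> topspace X. R z y} x))"

definition looks_left :: "'a topology \<Rightarrow> ('a \<Rightarrow> 'a \<Rightarrow> bool) \<Rightarrow> 'a set \<Rightarrow> 'a \<Rightarrow> bool" where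
  "looks_left X R Q x \<longleftrightarrow>
     (\<exists>U. openin X U \<and> x \<in> U \<and> (\<forall>y \<in> (U - {x}) \<inter> Q. R y x)) \<and>
     (\<forall>U. openin X U \<and> x \<in> U \<longrightarrow>
        (\<exists>y \<in> (U - {x}) \<inter> Q. is_nbhd X {z \<in> topspace X. R y z} x))"

definition bidirected :: "'a topology \<Rightarrow> ('a \<Rightarrow> 'a \<Rightarrow> bool) \<Rightarrow> 'a set \<Rightarrow> bool" where
  "bidirected X R Q \<longleftrightarrow>
     (\<exists>Al Ar. dense_in X Al \<and> dense_in X Ar \<and> topspace X = Al \<union> Ar \<and> Al \<inter> Ar = {} \<and>
        (\<forall>x\<in>Ar. looks_right X R Q x) \<and> (\<forall>x\<in>Al. looks_left X R Q x))"

end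

theory Submission
  imports Defs
begin

text \<open>
  Suppose f is a continuous open surjection from the Sorgenfrey line onto X. Since basic
  Sorgenfrey neighbourhoods are half-open intervals [t, t + e), continuity at t only controls
  f on the right of t: if f t looks to the right (left), then for some e > 0 every point of
  Q among the values of f on (t, t + e) is an R-successor (R-predecessor) of f t.
  By the Baire category theorem, one of the two directions occurs with a uniform radius on a
  dense subset E of some interval (a, b) of length at most that radius. Openness of f and
  density of the opposite class give s \<in> (a, b) with f s looking the other way, say to the
  left. Then some q = f s' with s < s' < b lies in Q and has a whole neighbourhood of f s
  among its R-successors; right continuity at s yields t \<in> E between s and s' with
  R q (f t), while the uniform radius at t gives R (f t) q, contradicting asymmetry.
\<close>

lemma topspace_sorgenfrey_line [simp]: "topspace sorgenfrey_line = UNIV"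
proof -
  have "t \<in> \<Union>{{a..<b} | a b. a < (b::real)}" for t
  proof (rule UnionI[of "{t..<t + 1}"])
    show "{t..<t + 1} \<in> {{a..<b} | a b. a < (b::real)}" by force
  qed simp
  then show ?thesis
    unfolding sorgenfrey_line_def by auto
qed

lemma openin_sorgenfrey_line_atLeastLessThan: "openin sorgenfrey_line {a..<b}"
proof (cases "a < b")
  case True
  then show ?thesis
    unfolding sorgenfrey_line_def by (intro topology_generated_by_Basis) auto
qed simp

lemma openin_sorgenfrey_line_contains_right_interval:
  assumes "openin sorgenfrey_line V" "t \<in> V"
  shows "\<exists>e>0. {t..<t + e} \<subseteq> V"
proof -
  have "generate_topology_on {{a..<b} | a b. a < (b::real)} V"
    using assms(1) unfolding sorgenfrey_line_def by (rule openin_topology_generated_by)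
  then have "\<forall>t\<in>V. \<exists>e>0. {t..<t + e} \<subseteq> V"
  proof (induction rule: generate_topology_on.induct)
    case (Int V W)
    show ?case
    proof
      fix t assume "t \<in> V \<inter> W"
      then obtain e1 e2 where "e1 > 0" "{t..<t + e1} \<subseteq> V" "e2 > 0" "{t..<t + e2} \<subseteq> W"
        using Int.IH by blast
      then show "\<exists>e>0. {t..<t + e} \<subseteq> V \<inter> W"
        by (intro exI[of _ "min e1 e2"]) (auto simp: subset_iff)
    qed
  next
    case (Basis V)
    then obtain a b where V: "V = {a..<b}" by auto
    show ?case
    proof
      fix t assume "t \<in> V"
      with V show "\<exists>e>0. {t..<t + e} \<subseteq> V"
        by (intro exI[of _ "b - t"]) auto
    qed
  qed blast+
  then show ?thesis
    using assms(2) by blast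
qed

lemma continuous_map_sorgenfrey_line_right:
  assumes "continuous_map sorgenfrey_line X f" "openin X U" "f t \<in> U"
  shows "\<exists>e>0. f ` {t..<t + e} \<subseteq> U"
proof -
  have "openin sorgenfrey_line {x. f x \<in> U}"
    using assms(1,2) unfolding continuous_map by auto
  with assms(3) show ?thesis
    using openin_sorgenfrey_line_contains_right_interval by fastforce
qed

lemma open_map_sorgenfrey_line_dense_preimage:
  assumes "continuous_map sorgenfrey_line X f" "open_map sorgenfrey_line X f"
    and "dense_in X A" "a < b"
  shows "\<exists>s\<in>{a<..<b}. f s \<in> A"
proof -
  define m where "m = (a + b) / 2"
  have m: "a < m" "m < b"
    using \<open>a < b\<close> by (auto simp: m_def)
  have "openin X (f ` {m..<b})"
    using assms(2) openin_sorgenfrey_line_atLeastLessThan unfolding open_map_def by blast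
  moreover have "f m \<in> f ` {m..<b}" "f m \<in> X closure_of A"
    using m assms(1,3) continuous_map_image_subset_topspace unfolding dense_in_def by fastforce+
  ultimately obtain s where "s \<in> {m..<b}" "f s \<in> A"
    unfolding in_closure_of by blast
  with m show ?thesis
    by (intro bexI[of _ s]) auto
qed

lemma countable_cover_somewhere_dense:
  fixes E :: "'i::countable \<Rightarrow> 'a::complete_space set"
  assumes "\<Union>(range E) = UNIV"
  shows "\<exists>i. interior (closure (E i)) \<noteq> {}"
proof (rule ccontr)
  assume "\<not> ?thesis"
  then have nowhere_dense: "interior (closure (E i)) = {}" for i
    by blast
  have "euclidean interior_of \<Union>(closure ` range E) = {}"
  proof (rule Baire_category_alt[of euclidean "closure ` range E"])
    show "completely_metrizable_space (euclidean :: 'a topology) \<or>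
        locally_compact_space (euclidean :: 'a topology) \<and> regular_space (euclidean :: 'a topology)"
      using completely_metrizable_space_euclidean by blast
    show "countable (closure ` range E)"
      by simp
    fix T assume "T \<in> closure ` range E"
    then obtain i where "T = closure (E i)"
      by blast
    then show "closedin euclidean T \<and> euclidean interior_of T = {}"
      using nowhere_dense[of i] by simp
  qed
  moreover have "x \<in> \<Union>(closure ` range E)" for x
  proof -
    obtain i where "x \<in> E i"
      using assms by blast
    then show ?thesis
      using closure_subset by fastforce
  qed
  then have "\<Union>(closure ` range E) = UNIV"
    by blast
  ultimately show False
    by simp
qed

lemma uniform_radius_on_interval:
  fixes P :: "'c::countable \<Rightarrow> real \<Rightarrow> real \<Rightarrow> bool"
  assumes radius: "\<And>t. \<exists>c e. e > 0 \<and> P c t e"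
    and antimono: "\<And>c t e e'. P c t e \<Longrightarrow> e' \<le> e \<Longrightarrow> P c t e'"
  shows "\<exists>c a b. a < b \<and> {a<..<b} \<subseteq> closure {t. P c t (b - a)}"
proof -
  define E where "E = (\<lambda>(n::nat, c). {t. P c t (inverse (real (Suc n)))})"
  have "\<Union>(range E) = UNIV"
  proof -
    have "\<exists>k. t \<in> E k" for t
    proof -
      obtain c e where "e > 0" "P c t e"
        using radius by blast
      moreover obtain n where "inverse (real (Suc n)) < e"
        using \<open>e > 0\<close> reals_Archimedean by blast
      ultimately have "P c t (inverse (real (Suc n)))"
        using antimono less_imp_le by blast
      then show ?thesis
        by (auto simp: E_def)
    qed
    then show ?thesis by blast
  qed
  then obtain k where "interior (closure (E k)) \<noteq> {}"
    using countable_cover_somewhere_dense by blast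
  then obtain n c x where "x \<in> interior (closure (E (n, c)))"
    by (metis ex_in_conv prod.collapse)
  then obtain r where r: "r > 0" "ball x r \<subseteq> closure (E (n, c))"
    unfolding mem_interior by blast
  define \<delta> where "\<delta> = min r (inverse (real (Suc n)))"
  have \<delta>: "\<delta> > 0" "\<delta> \<le> r" "\<delta> \<le> inverse (real (Suc n))"
    using r by (auto simp: \<delta>_def)
  have "{x - \<delta>/2<..<x + \<delta>/2} \<subseteq> ball x r"
    using \<delta> by (auto simp: dist_real_def)
  also have "\<dots> \<subseteq> closure (E (n, c))"
    by (fact r(2))
  also have "\<dots> \<subseteq> closure {t. P c t \<delta>}"
    by (intro closure_mono) (auto simp: E_def intro: antimono[OF _ \<delta>(3)])
  finally have "{x - \<delta>/2<..<x + \<delta>/2} \<subseteq> closure {t. P c t ((x + \<delta>/2) - (x - \<delta>/2))}"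
    by simp
  with \<delta>(1) show ?thesis
    by (intro exI[of _ c] exI[of _ "x - \<delta>/2"] exI[of _ "x + \<delta>/2"]) simp
qed

definition right_directed :: "(real \<Rightarrow> 'a) \<Rightarrow> ('a \<Rightarrow> 'a \<Rightarrow> bool) \<Rightarrow> 'a set \<Rightarrow> real \<Rightarrow> real \<Rightarrow> bool"
  where "right_directed f R Q t e \<longleftrightarrow>
    (\<forall>s. t < s \<longrightarrow> s < t + e \<longrightarrow> f s \<in> Q \<longrightarrow> f s \<noteq> f t \<longrightarrow> R (f t) (f s))"

lemma looks_left_eq_looks_right_converse: "looks_left X R Q = looks_right X (\<lambda>x y. R y x) Q"
  unfolding looks_left_def looks_right_def by (intro ext) simp

lemma asymmetric_on_converse: "asymmetric_on A R \<Longrightarrow> asymmetric_on A (\<lambda>x y. R y x)"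
  unfolding asymmetric_on_def by blast

lemma looks_right_imp_right_directed:
  assumes "continuous_map sorgenfrey_line X f" "looks_right X R Q (f t)"
  shows "\<exists>e>0. right_directed f R Q t e"
proof -
  obtain U where U: "openin X U" "f t \<in> U" "\<forall>y \<in> (U - {f t}) \<inter> Q. R (f t) y"
    using assms(2) unfolding looks_right_def by blast
  obtain e where "e > 0" "f ` {t..<t + e} \<subseteq> U"
    using continuous_map_sorgenfrey_line_right[OF assms(1) U(1,2)] by blast
  with U(3) show ?thesis
    unfolding right_directed_def by (intro exI[of _ e]) (auto simp: image_subset_iff)
qed

lemma right_directed_block_excludes_looks_left:
  assumes cont: "continuous_map sorgenfrey_line X f" and opn: "open_map sorgenfrey_line X f"
    and asym: "asymmetric_on (topspace X) R"
    and block: "{a<..<b} \<subseteq> closure {t. right_directed f R Q t (b - a)}"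
    and s: "s \<in> {a<..<b}" and left: "looks_left X R Q (f s)"
  shows False
proof -
  have top: "f x \<in> topspace X" for x
    using cont continuous_map_image_subset_topspace by fastforce
  have "openin X (f ` {s..<b})"
    using opn openin_sorgenfrey_line_atLeastLessThan unfolding open_map_def by blast
  moreover have "f s \<in> f ` {s..<b}"
    using s by auto
  ultimately obtain s' where s': "s' \<in> {s..<b}" "f s' \<noteq> f s" "f s' \<in> Q"
    and succ: "is_nbhd X {z \<in> topspace X. R (f s') z} (f s)"
    using left unfolding looks_left_def by blast
  have "s < s'"
    using s' by (cases "s = s'") auto
  obtain V where V: "openin X V" "f s \<in> V" "V \<subseteq> {z \<in> topspace X. R (f s') z}"
    using succ unfolding is_nbhd_def by blast
  obtain e where e: "e > 0" "f ` {s..<s + e} \<subseteq> V"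
    using continuous_map_sorgenfrey_line_right[OF cont V(1,2)] by blast
  define m where "m = (s + min (s + e) s') / 2"
  have "m \<in> {s<..<min (s + e) s'}" "m \<in> {a<..<b}"
    using s s' \<open>s < s'\<close> e(1) by (auto simp: m_def)
  then have "{s<..<min (s + e) s'} \<inter> closure {t. right_directed f R Q t (b - a)} \<noteq> {}"
    using block by blast
  then obtain t where t: "s < t" "t < s + e" "t < s'" "right_directed f R Q t (b - a)"
    by (auto simp: open_Int_closure_eq_empty)
  have "f t \<in> V"
    using e(2) t by auto
  then have "R (f s') (f t)"
    using V(3) by auto
  moreover have "f t \<noteq> f s'"
    using \<open>R (f s') (f t)\<close> asym top unfolding asymmetric_on_def by metis
  then have "R (f t) (f s')"
    using t s s' unfolding right_directed_def by auto
  ultimately show False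
    using asym top unfolding asymmetric_on_def by metis
qed

lemma right_directed_cover_excludes_opposite_looks:
  assumes cont: "continuous_map sorgenfrey_line X f" and opn: "open_map sorgenfrey_line X f"
    and asym: "asymmetric_on (topspace X) R"
    and cover: "\<And>t. \<exists>e>0. right_directed f R Q t e \<or> right_directed f (\<lambda>x y. R y x) Q t e"
    and "dense_in X Al" "\<forall>x\<in>Al. looks_left X R Q x"
    and "dense_in X Ar" "\<forall>x\<in>Ar. looks_right X R Q x"
  shows False
proof -
  define R' where "R' c = (if c then R else (\<lambda>x y. R y x))" for c
  have "\<exists>c e. e > 0 \<and> right_directed f (R' c) Q t e" for t
    using cover[of t] unfolding R'_def by (metis (full_types))
  then obtain c a b where "a < b"
    and block: "{a<..<b} \<subseteq> closure {t. right_directed f (R' c) Q t (b - a)}"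
    using uniform_radius_on_interval[of "\<lambda>c. right_directed f (R' c) Q"]
    by (auto simp: right_directed_def)
  have "\<exists>A. dense_in X A \<and> (\<forall>x\<in>A. looks_left X (R' c) Q x)"
    using assms(5-8) by (cases c) (auto simp: R'_def looks_left_eq_looks_right_converse)
  then obtain A s where "dense_in X A" "\<forall>x\<in>A. looks_left X (R' c) Q x"
    and s: "s \<in> {a<..<b}" "f s \<in> A"
    using open_map_sorgenfrey_line_dense_preimage[OF cont opn _ \<open>a < b\<close>] by blast
  moreover have "asymmetric_on (topspace X) (R' c)"
    using asymmetric_on_converse[OF asym] asym by (simp add: R'_def)
  ultimately show False
    using right_directed_block_excludes_looks_left[OF cont opn _ block s(1)] by blast
qed

theorem mainTheorem11:
  fixes X :: "'a topology" and Q :: "'a set" and R :: "'a \<Rightarrow> 'a \<Rightarrow> bool"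
  assumes "Hausdorff_space X"
    and "dense_in X Q"
    and "asymmetric_on (topspace X) R"
    and "bidirected X R Q"
  shows "\<not> continuous_open_image_of X sorgenfrey_line"
proof
  assume "continuous_open_image_of X sorgenfrey_line"
  then obtain f where cont: "continuous_map sorgenfrey_line X f"
    and opn: "open_map sorgenfrey_line X f" and surj: "range f = topspace X"
    unfolding continuous_open_image_of_def by auto
  obtain Al Ar where Al: "dense_in X Al" "\<forall>x\<in>Al. looks_left X R Q x"
    and Ar: "dense_in X Ar" "\<forall>x\<in>Ar. looks_right X R Q x"
    and "topspace X = Al \<union> Ar"
    using assms(4) unfolding bidirected_def by blast
  have "\<exists>e>0. right_directed f R Q t e \<or> right_directed f (\<lambda>x y. R y x) Q t e" for t
  proof -
    have "looks_right X R Q (f t) \<or> looks_right X (\<lambda>x y. R y x) Q (f t)"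
      using Al(2) Ar(2) surj \<open>topspace X = Al \<union> Ar\<close>
      unfolding looks_left_eq_looks_right_converse by blast
    then show ?thesis
      using looks_right_imp_right_directed[OF cont] by blast
  qed
  with right_directed_cover_excludes_opposite_looks[OF cont opn assms(3)] Al Ar
  show False by blast
qed

end
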